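(* Let $(\mathfrak g,D)$ be a difference Lie algebra, $\mathfrak h$ a vector space regarded as an abelian Lie algebra, $K:\mathfrak h\to\mathfrak h$ linear, and $(\mathfrak h,\varrho,K)$ a representation of $(\mathfrak g,D)$. Then isomorphism classes of abelian extensions of $(\mathfrak g,D)$ by $(\mathfrak h,K)$ whose induced representation is $\varrho$ are in bijection with $\mathcal H^2(\mathfrak g,D;\mathfrak h,\varrho,K)$, the bijection sending an extension to the class of the 2-cocycle $(\omega,\chi)$ associated with any section.
   Context: A difference Lie algebra $(\mathfrak g,D)$: a Lie algebra with linear $D$ such that $D[x,y]=[x,D(y)]-[y,D(x)]+[D(x),D(y)]$. A representation $(V,\varrho,K)$ of $(\mathfrak g,D)$: a Lie representation $\varrho:\mathfrak g\to\mathfrak{gl}(V)$ and linear $K:V\to V$ with $K(\varrho(x)u)=\varrho(D(x))u+\varrho(x)K(u)+\varrho(D(x))K(u)$. An abelian extension of $(\mathfrak g,D)$ by $(\mathfrak h,K)$ is a short exact sequence of Lie algebras $0\to\mathfrak h\xrightarrow{i}\hat{\mathfrak g}\xrightarrow{p}\mathfrak g\to0$, $\mathfrak h$ abelian, with $(\hat{\mathfrak g},\hat D)$ a difference Lie algebra and $\hat D\circ i=i\circ K$, $p\circ\hat D=D\circ p$. For a section $s$ ($p\circ s=\mathrm{Id}$), identifying $\mathfrak h$ with $i(\mathfrak h)$: the induced representation is $\varrho(x)u=[s(x),u]_{\hat{\mathfrak g}}$ (independent of $s$), and the associated cocycle is $\omega(x,y)=[s(x),s(y)]_{\hat{\mathfrak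 g}}-s([x,y])$, $\chi(x)=\hat D(s(x))-s(D(x))$. Two abelian extensions $(\hat{\mathfrak g},\hat D)$, $(\tilde{\mathfrak g},\tilde D)$ are isomorphic if there is an isomorphism of difference Lie algebras $\kappa:\tilde{\mathfrak g}\to\hat{\mathfrak g}$ (Lie algebra isomorphism with $\hat D\kappa=\kappa\tilde D$) compatible with the inclusions of $\mathfrak h$ and projections to $\mathfrak g$ (identity on $\mathfrak h$ and on $\mathfrak g$). Cohomology with coefficients in $(V,\varrho,K)$: $\mathfrak C^1=\mathrm{Hom}(\mathfrak g,V)$, $\mathfrak C^n=\mathrm{Hom}(\wedge^n\mathfrak g,V)\oplus\mathrm{Hom}(\wedge^{n-1}\mathfrak g,V)$ ($n\ge2$), $\delta_\varrho(f,\theta)=(d^{CE}_\varrho f,\partial\theta+T(f))$ ($\delta_\varrho f=(d^{CE}_\varrho f,T(f))$ for $n=1$), where $d^{CE}_\varrho$ is the Chevalley–Eilenberg differential, $\partial\theta(x_1,\dots,x_n)=\sum_i(-1)^{i+1}\varrho(x_i)\theta(\dots,\hat x_i,\dots)+\sum_i(-1)^{i+1}\varrho(D(x_i))\theta(\dots,\hat x_i,\dots)+\sum_{i<j}(-1)^{i+j}\theta([x_i,x_j],x_1,\dots,\hat x_i,\dots,\hat x_j,\dots,x_n)$, and $T(f)(x_1,\dots,x_n)=(-1)^n\big(\sum_{k=1}^n\sum_{i_1<\cdots<i_k}f(y_1,\dots,y_n)-K(f(x_1,\dots,x_n))\big)$ with $y_j=D(x_j)$ for $j\in\{i_1,\dots,i_k\}$,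 $y_j=x_j$ otherwise; $\mathcal H^2(\mathfrak g,D;V,\varrho,K)$ is the second cohomology group. *)

theory Defs
  imports Complex_Main "HOL-Library.Product_Plus"
begin

text \<open>All vector spaces are over a common field 'k, given as a type 'a of class
ab_group_add together with a scalar multiplication satisfying the locale
vector_space.  Linear maps are Vector_Spaces.linear.\<close>

definition lie_algebra :: "('k::field \<Rightarrow> 'a \<Rightarrow> 'a) \<Rightarrow> ('a::ab_group_add \<Rightarrow> 'a \<Rightarrow> 'a) \<Rightarrow> bool" where
  "lie_algebra s b \<longleftrightarrow> vector_space s
     \<and> (\<forall>y. Vector_Spaces.linear s s (\<lambda>x. b x y))
     \<and> (\<forall>x. Vector_Spaces.linear s s (b x))
     \<and> (\<forall>x. b x x = 0)
     \<and> (\<forall>x y z. b x (b y z) + b y (b z x) + b z (b x y) = 0)"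

definition diff_lie :: "('k::field \<Rightarrow> 'a \<Rightarrow> 'a) \<Rightarrow> ('a::ab_group_add \<Rightarrow> 'a \<Rightarrow> 'a) \<Rightarrow> ('a \<Rightarrow> 'a) \<Rightarrow> bool" where
  "diff_lie s b D \<longleftrightarrow> lie_algebra s b \<and> Vector_Spaces.linear s s D
     \<and> (\<forall>x y. D (b x y) = b x (D y) - b y (D x) + b (D x) (D y))"

definition diff_rep ::
  "('k::field \<Rightarrow> 'g \<Rightarrow> 'g) \<Rightarrow> ('g::ab_group_add \<Rightarrow> 'g \<Rightarrow> 'g) \<Rightarrow> ('g \<Rightarrow> 'g)
   \<Rightarrow> ('k \<Rightarrow> 'v \<Rightarrow> 'v) \<Rightarrow> ('v::ab_group_add \<Rightarrow> 'v) \<Rightarrow> ('g \<Rightarrow> 'v \<Rightarrow> 'v) \<Rightarrow> bool" where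
  "diff_rep sg bg D sv K \<rho> \<longleftrightarrow> diff_lie sg bg D \<and> vector_space sv
     \<and> (\<forall>x. Vector_Spaces.linear sv sv (\<rho> x))
     \<and> (\<forall>u. Vector_Spaces.linear sg sv (\<lambda>x. \<rho> x u))
     \<and> (\<forall>x y u. \<rho> (bg x y) u = \<rho> x (\<rho> y u) - \<rho> y (\<rho> x u))
     \<and> Vector_Spaces.linear sv sv K
     \<and> (\<forall>x u. K (\<rho> x u) = \<rho> (D x) u + \<rho> x (K u) + \<rho> (D x) (K u))"

record ('k, 'g, 'h, 'e) abext =
  esc  :: "'k \<Rightarrow> 'e \<Rightarrow> 'e"
  ebr  :: "'e \<Rightarrow> 'e \<Rightarrow> 'e"
  eD   :: "'e \<Rightarrow> 'e"
  einc :: "'h \<Rightarrow> 'e"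
  eproj :: "'e \<Rightarrow> 'g"

definition abelian_ext ::
  "('k::field \<Rightarrow> 'g \<Rightarrow> 'g) \<Rightarrow> ('g::ab_group_add \<Rightarrow> 'g \<Rightarrow> 'g) \<Rightarrow> ('g \<Rightarrow> 'g)
   \<Rightarrow> ('k \<Rightarrow> 'h \<Rightarrow> 'h) \<Rightarrow> ('h::ab_group_add \<Rightarrow> 'h)
   \<Rightarrow> ('k, 'g, 'h, 'e::ab_group_add) abext \<Rightarrow> bool" where
  "abelian_ext sg bg D sh K E \<longleftrightarrow>
     diff_lie (esc E) (ebr E) (eD E)
     \<and> Vector_Spaces.linear sh (esc E) (einc E)
     \<and> Vector_Spaces.linear (esc E) sg (eproj E)
     \<and> inj (einc E) \<and> surj (eproj E)
     \<and> range (einc E) = {e. eproj E e = 0}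
     \<and> (\<forall>u v. ebr E (einc E u) (einc E v) = 0)
     \<and> (\<forall>a b. eproj E (ebr E a b) = bg (eproj E a) (eproj E b))
     \<and> (\<forall>u. eD E (einc E u) = einc E (K u))
     \<and> (\<forall>a. eproj E (eD E a) = D (eproj E a))"

definition lin_section ::
  "('k::field \<Rightarrow> 'g::ab_group_add \<Rightarrow> 'g) \<Rightarrow> ('k, 'g, 'h, 'e::ab_group_add) abext \<Rightarrow> ('g \<Rightarrow> 'e) \<Rightarrow> bool" where
  "lin_section sg E s \<longleftrightarrow> Vector_Spaces.linear sg (esc E) s \<and> (\<forall>x. eproj E (s x) = x)"

definition induces_rep ::
  "('k::field \<Rightarrow> 'g::ab_group_add \<Rightarrow> 'g) \<Rightarrow> ('g \<Rightarrow> 'h \<Rightarrow> 'h) \<Rightarrow> ('k, 'g, 'h, 'e::ab_group_add) abext \<Rightarrow> bool" where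
  "induces_rep sg \<rho> E \<longleftrightarrow> (\<forall>s. lin_section sg E s \<longrightarrow>
      (\<forall>x u. ebr E (s x) (einc E u) = einc E (\<rho> x u)))"

definition ext_omega ::
  "('g \<Rightarrow> 'g \<Rightarrow> 'g) \<Rightarrow> ('k, 'g, 'h, 'e::ab_group_add) abext \<Rightarrow> ('g \<Rightarrow> 'e) \<Rightarrow> 'g \<Rightarrow> 'g \<Rightarrow> 'h" where
  "ext_omega bg E s x y = inv (einc E) (ebr E (s x) (s y) - s (bg x y))"

definition ext_chi ::
  "('g \<Rightarrow> 'g) \<Rightarrow> ('k, 'g, 'h, 'e::ab_group_add) abext \<Rightarrow> ('g \<Rightarrow> 'e) \<Rightarrow> 'g \<Rightarrow> 'h" where
  "ext_chi D E s x = inv (einc E) (eD E (s x) - s (D x))"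

text \<open>Cohomology.  A 2-cochain is a pair (f, theta) with f an alternating bilinear
map g x g -> V (i.e. an element of Hom(wedge^2 g, V)) and theta in Hom(g, V).\<close>

definition dCE2 :: "('g \<Rightarrow> 'g \<Rightarrow> 'g) \<Rightarrow> ('g \<Rightarrow> 'v \<Rightarrow> 'v) \<Rightarrow> ('g \<Rightarrow> 'g \<Rightarrow> 'v::ab_group_add)
   \<Rightarrow> 'g \<Rightarrow> 'g \<Rightarrow> 'g \<Rightarrow> 'v" where
  "dCE2 bg \<rho> f x y z = \<rho> x (f y z) - \<rho> y (f x z) + \<rho> z (f x y)
      - f (bg x y) z + f (bg x z) y - f (bg y z) x"

definition partial1 :: "('g \<Rightarrow> 'g \<Rightarrow> 'g) \<Rightarrow> ('g \<Rightarrow> 'g) \<Rightarrow> ('g \<Rightarrow> 'v \<Rightarrow> 'v) \<Rightarrow> ('g \<Rightarrow> 'v::ab_group_add)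
   \<Rightarrow> 'g \<Rightarrow> 'g \<Rightarrow> 'v" where
  "partial1 bg D \<rho> \<theta> x y = \<rho> x (\<theta> y) - \<rho> y (\<theta> x) + \<rho> (D x) (\<theta> y) - \<rho> (D y) (\<theta> x)
      - \<theta> (bg x y)"

text \<open>T(f) for f in Hom(wedge^2 g, V): sign (-1)^2 = 1.\<close>
definition T2 :: "('g \<Rightarrow> 'g) \<Rightarrow> ('v \<Rightarrow> 'v) \<Rightarrow> ('g \<Rightarrow> 'g \<Rightarrow> 'v::ab_group_add) \<Rightarrow> 'g \<Rightarrow> 'g \<Rightarrow> 'v" where
  "T2 D K f x y = f (D x) y + f x (D y) + f (D x) (D y) - K (f x y)"

definition cob1 :: "('g \<Rightarrow> 'g \<Rightarrow> 'g) \<Rightarrow> ('g \<Rightarrow> 'g) \<Rightarrow> ('v \<Rightarrow> 'v) \<Rightarrow> ('g \<Rightarrow> 'v \<Rightarrow> 'v)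
   \<Rightarrow> ('g \<Rightarrow> 'v::ab_group_add) \<Rightarrow> ('g \<Rightarrow> 'g \<Rightarrow> 'v) \<times> ('g \<Rightarrow> 'v)" where
  "cob1 bg D K \<rho> f = ((\<lambda>x y. \<rho> x (f y) - \<rho> y (f x) - f (bg x y)),
                      (\<lambda>x. - (f (D x) - K (f x))))"

definition cochain2 :: "('k::field \<Rightarrow> 'g::ab_group_add \<Rightarrow> 'g) \<Rightarrow> ('k \<Rightarrow> 'v \<Rightarrow> 'v)
   \<Rightarrow> ('g \<Rightarrow> 'g \<Rightarrow> 'v::ab_group_add) \<times> ('g \<Rightarrow> 'v) \<Rightarrow> bool" where
  "cochain2 sg sv c \<longleftrightarrow> (\<forall>y. Vector_Spaces.linear sg sv (\<lambda>x. fst c x y))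
     \<and> (\<forall>x. Vector_Spaces.linear sg sv (fst c x))
     \<and> (\<forall>x. fst c x x = 0)
     \<and> Vector_Spaces.linear sg sv (snd c)"

definition Z2 :: "('k::field \<Rightarrow> 'g::ab_group_add \<Rightarrow> 'g) \<Rightarrow> ('g \<Rightarrow> 'g \<Rightarrow> 'g) \<Rightarrow> ('g \<Rightarrow> 'g)
   \<Rightarrow> ('k \<Rightarrow> 'v \<Rightarrow> 'v) \<Rightarrow> ('v \<Rightarrow> 'v) \<Rightarrow> ('g \<Rightarrow> 'v \<Rightarrow> 'v)
   \<Rightarrow> (('g \<Rightarrow> 'g \<Rightarrow> 'v::ab_group_add) \<times> ('g \<Rightarrow> 'v)) set" where
  "Z2 sg bg D sv K \<rho> = {c. cochain2 sg sv c
      \<and> (\<forall>x y z. dCE2 bg \<rho> (fst c) x y z = 0)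
      \<and> (\<forall>x y. partial1 bg D \<rho> (snd c) x y + T2 D K (fst c) x y = 0)}"

definition cls2 :: "('k::field \<Rightarrow> 'g::ab_group_add \<Rightarrow> 'g) \<Rightarrow> ('g \<Rightarrow> 'g \<Rightarrow> 'g) \<Rightarrow> ('g \<Rightarrow> 'g)
   \<Rightarrow> ('k \<Rightarrow> 'v \<Rightarrow> 'v) \<Rightarrow> ('v \<Rightarrow> 'v) \<Rightarrow> ('g \<Rightarrow> 'v \<Rightarrow> 'v)
   \<Rightarrow> ('g \<Rightarrow> 'g \<Rightarrow> 'v::ab_group_add) \<times> ('g \<Rightarrow> 'v)
   \<Rightarrow> (('g \<Rightarrow> 'g \<Rightarrow> 'v) \<times> ('g \<Rightarrow> 'v)) set" where
  "cls2 sg bg D sv K \<rho> c = {c' \<in> Z2 sg bg D sv K \<rho>. \<exists>f. Vector_Spaces.linear sg sv f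
      \<and> (\<forall>x y. fst c' x y = fst c x y + fst (cob1 bg D K \<rho> f) x y)
      \<and> (\<forall>x. snd c' x = snd c x + snd (cob1 bg D K \<rho> f) x)}"

definition H2 :: "('k::field \<Rightarrow> 'g::ab_group_add \<Rightarrow> 'g) \<Rightarrow> ('g \<Rightarrow> 'g \<Rightarrow> 'g) \<Rightarrow> ('g \<Rightarrow> 'g)
   \<Rightarrow> ('k \<Rightarrow> 'v \<Rightarrow> 'v) \<Rightarrow> ('v \<Rightarrow> 'v) \<Rightarrow> ('g \<Rightarrow> 'v \<Rightarrow> 'v)
   \<Rightarrow> (('g \<Rightarrow> 'g \<Rightarrow> 'v::ab_group_add) \<times> ('g \<Rightarrow> 'v)) set set" where
  "H2 sg bg D sv K \<rho> = cls2 sg bg D sv K \<rho> ` Z2 sg bg D sv K \<rho>"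

definition ext_class :: "('k::field \<Rightarrow> 'g::ab_group_add \<Rightarrow> 'g) \<Rightarrow> ('g \<Rightarrow> 'g \<Rightarrow> 'g) \<Rightarrow> ('g \<Rightarrow> 'g)
   \<Rightarrow> ('k \<Rightarrow> 'h \<Rightarrow> 'h) \<Rightarrow> ('h \<Rightarrow> 'h) \<Rightarrow> ('g \<Rightarrow> 'h \<Rightarrow> 'h)
   \<Rightarrow> ('k, 'g, 'h::ab_group_add, 'e::ab_group_add) abext
   \<Rightarrow> (('g \<Rightarrow> 'g \<Rightarrow> 'h) \<times> ('g \<Rightarrow> 'h)) set" where
  "ext_class sg bg D sh K \<rho> E =
     (let s = (SOME s. lin_section sg E s)
      in cls2 sg bg D sh K \<rho> (ext_omega bg E s, ext_chi D E s))"

definition ext_iso :: "('k::field, 'g::ab_group_add, 'h, 'e1::ab_group_add) abext \<Rightarrow> ('k, 'g, 'h, 'e2::ab_group_add) abext \<Rightarrow> bool" where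
  "ext_iso E1 E2 \<longleftrightarrow> (\<exists>\<kappa>. bij \<kappa> \<and> Vector_Spaces.linear (esc E2) (esc E1) \<kappa>
      \<and> (\<forall>a b. \<kappa> (ebr E2 a b) = ebr E1 (\<kappa> a) (\<kappa> b))
      \<and> (\<forall>a. eD E1 (\<kappa> a) = \<kappa> (eD E2 a))
      \<and> (\<forall>u. \<kappa> (einc E2 u) = einc E1 u)
      \<and> (\<forall>a. eproj E1 (\<kappa> a) = eproj E2 a))"

end

theory Submission
  imports Defs
begin

text \<open>A linear section s of the projection identifies the extension with g \<oplus> h, where the
bracket and the difference operator are those of g and h twisted by \<omega> and \<chi>. The Jacobi identity
and the compatibility of the difference operator with the bracket, evaluated on values of s, are
exactly the cocycle conditions on (\<omega>, \<chi>). Replacing s by s + einc \<circ> f changes (\<omega>, \<chi>) by the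
coboundary of f, so the class does not depend on s, and an isomorphism of extensions transports a
section to one with the same cocycle. Conversely, if the classes agree, one section can be shifted
until the cocycles coincide, and matching the two coordinate descriptions gives an isomorphism.
Finally, every cocycle is realised by g \<oplus> h with the twisted structure.\<close>

lemma lin_add: "Vector_Spaces.linear s1 s2 f \<Longrightarrow> f (x + y) = f x + f y"
  by (simp add: linear_iff_module_hom module_hom.add)

lemma lin_diff: "Vector_Spaces.linear s1 s2 f \<Longrightarrow> f (x - y) = f x - f y"
  by (simp add: linear_iff_module_hom module_hom.diff)

lemma lin_neg: "Vector_Spaces.linear s1 s2 f \<Longrightarrow> f (- x) = - f x"
  by (simp add: linear_iff_module_hom module_hom.neg)

lemma lin_0: "Vector_Spaces.linear s1 s2 f \<Longrightarrow> f 0 = 0"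
  by (simp add: linear_iff_module_hom module_hom.zero)

lemma lin_scale: "Vector_Spaces.linear s1 s2 f \<Longrightarrow> f (s1 c x) = s2 c (f x)"
  by (simp add: linear_iff_module_hom module_hom.scale)

lemmas lin_simps = lin_add lin_diff lin_neg lin_0

lemma lin_vector_space_pair: "Vector_Spaces.linear s1 s2 f \<Longrightarrow> vector_space_pair s1 s2"
  by (simp add: Vector_Spaces.linear_iff vector_space_pair_def)

lemma lin_compose_add:
  "Vector_Spaces.linear s1 s2 f \<Longrightarrow> Vector_Spaces.linear s1 s2 g \<Longrightarrow>
   Vector_Spaces.linear s1 s2 (\<lambda>x. f x + g x)"
  by (rule vector_space_pair.linear_compose_add[OF lin_vector_space_pair])

lemma lin_compose_sub:
  "Vector_Spaces.linear s1 s2 f \<Longrightarrow> Vector_Spaces.linear s1 s2 g \<Longrightarrow>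
   Vector_Spaces.linear s1 s2 (\<lambda>x. f x - g x)"
  by (rule vector_space_pair.linear_compose_sub[OF lin_vector_space_pair])

lemma lin_compose:
  "Vector_Spaces.linear s1 s2 f \<Longrightarrow> Vector_Spaces.linear s2 s3 g \<Longrightarrow>
   Vector_Spaces.linear s1 s3 (\<lambda>x. g (f x))"
  using Vector_Spaces.linear_compose[of s1 s2 f s3 g] by (simp add: o_def)

lemma lin_inv_into_range:
  assumes g: "Vector_Spaces.linear s1 s3 g" and i: "Vector_Spaces.linear s2 s3 i"
    and "inj i" and "range g \<subseteq> range i"
  shows "Vector_Spaces.linear s1 s2 (\<lambda>x. inv i (g x))"
proof -
  interpret vector_space_pair s2 s3 using i by (rule lin_vector_space_pair)
  obtain h where h: "Vector_Spaces.linear s3 s2 h" "h \<circ> i = id"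
    using linear_injective_left_inverse[OF i \<open>inj i\<close>] by blast
  have "inv i (g x) = h (g x)" for x
  proof -
    obtain y where "g x = i y" using \<open>range g \<subseteq> range i\<close> by blast
    then show ?thesis using \<open>inj i\<close> h(2) by (simp add: pointfree_idE)
  qed
  then show ?thesis using lin_compose[OF g h(1)] by simp
qed

lemma alternating_antisym:
  fixes f :: "'a::ab_group_add \<Rightarrow> 'a \<Rightarrow> 'b::ab_group_add"
  assumes "\<And>x y z. f (x + y) z = f x z + f y z" and "\<And>x y z. f z (x + y) = f z x + f z y"
    and "\<And>x. f x x = 0"
  shows "f x y = - f y x"
proof -
  have "f (x + y) (x + y) = f x x + f y x + (f x y + f y y)" by (simp only: assms(1,2))
  then have "f x y + f y x = 0" by (simp add: assms(3) algebra_simps)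
  then show ?thesis by (simp add: eq_neg_iff_add_eq_0 add.commute)
qed

locale lie_alg =
  fixes s :: "'k::field \<Rightarrow> 'a::ab_group_add \<Rightarrow> 'a" and b :: "'a \<Rightarrow> 'a \<Rightarrow> 'a"
  assumes lie: "lie_algebra s b"
begin

lemma vector_space: "vector_space s" using lie by (simp add: lie_algebra_def)
lemma linear_left: "Vector_Spaces.linear s s (\<lambda>x. b x y)" using lie by (simp add: lie_algebra_def)
lemma linear_right: "Vector_Spaces.linear s s (b x)" using lie by (simp add: lie_algebra_def)
lemmas bracket_simps[simp] = lin_simps[OF linear_left] lin_simps[OF linear_right]
lemma scale_left: "b (s c x) y = s c (b x y)" using lin_scale[OF linear_left] by simp
lemma scale_right: "b x (s c y) = s c (b x y)" using lin_scale[OF linear_right] by simp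
lemma alternating[simp]: "b x x = 0" using lie by (simp add: lie_algebra_def)
lemma jacobi: "b x (b y z) + b y (b z x) + b z (b x y) = 0" using lie by (simp add: lie_algebra_def)

lemma antisym: "b x y = - b y x"
  by (rule alternating_antisym) simp_all

lemma jacobi_inner: "b x (b y z) - b y (b x z) + b z (b x y) = 0"
  using jacobi[of x y z] antisym[of x z] by (simp add: algebra_simps)

lemma jacobi_outer: "b (b x y) z - b (b x z) y + b (b y z) x = 0"
proof -
  have "b (b x y) z - b (b x z) y + b (b y z) x = - (b x (b y z) + b y (b z x) + b z (b x y))"
    using antisym[of "b y z" x] antisym[of "b x z" y] antisym[of x z] antisym[of "b x y" z]
    by (simp add: algebra_simps)
  then show ?thesis by (simp add: jacobi)
qed

end

locale difference_rep =
  fixes sg :: "'k::field \<Rightarrow> 'g::ab_group_add \<Rightarrow> 'g" and bg :: "'g \<Rightarrow> 'g \<Rightarrow> 'g" and D :: "'g \<Rightarrow> 'g"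
    and sh :: "'k \<Rightarrow> 'h::ab_group_add \<Rightarrow> 'h" and K :: "'h \<Rightarrow> 'h" and \<rho> :: "'g \<Rightarrow> 'h \<Rightarrow> 'h"
  assumes rep: "diff_rep sg bg D sh K \<rho>"
begin

lemma diff_lie: "diff_lie sg bg D" using rep by (simp add: diff_rep_def)
sublocale g: lie_alg sg bg using diff_lie by (simp add: diff_lie_def lie_alg_def)

lemma vector_space_h: "vector_space sh" using rep by (simp add: diff_rep_def)
lemma linear_D: "Vector_Spaces.linear sg sg D" using diff_lie by (simp add: diff_lie_def)
lemma D_bracket: "D (bg x y) = bg x (D y) - bg y (D x) + bg (D x) (D y)"
  using diff_lie by (simp add: diff_lie_def)
lemma linear_K: "Vector_Spaces.linear sh sh K" using rep by (simp add: diff_rep_def)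
lemma linear_\<rho>_right: "Vector_Spaces.linear sh sh (\<rho> x)" using rep by (simp add: diff_rep_def)
lemma linear_\<rho>_left: "Vector_Spaces.linear sg sh (\<lambda>x. \<rho> x u)" using rep by (simp add: diff_rep_def)
lemmas linear_simps[simp] = lin_simps[OF linear_D] lin_simps[OF linear_K]
  lin_simps[OF linear_\<rho>_left] lin_simps[OF linear_\<rho>_right]
lemma \<rho>_bracket: "\<rho> (bg x y) u = \<rho> x (\<rho> y u) - \<rho> y (\<rho> x u)" using rep by (simp add: diff_rep_def)
lemma K_\<rho>: "K (\<rho> x u) = \<rho> (D x) u + \<rho> x (K u) + \<rho> (D x) (K u)" using rep by (simp add: diff_rep_def)

lemma cls2_self: "c \<in> Z2 sg bg D sh K \<rho> \<Longrightarrow> c \<in> cls2 sg bg D sh K \<rho> c"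
  unfolding cls2_def
  by (auto intro!: exI[of _ "\<lambda>x. 0"] vector_space_pair.linear_zero g.vector_space vector_space_h
      simp: cob1_def vector_space_pair_def)

lemma cls2_eq_if_cohomologous:
  assumes f: "Vector_Spaces.linear sg sh f"
    and fst: "\<And>x y. fst c' x y = fst c x y + fst (cob1 bg D K \<rho> f) x y"
    and snd: "\<And>x. snd c' x = snd c x + snd (cob1 bg D K \<rho> f) x"
  shows "cls2 sg bg D sh K \<rho> c' = cls2 sg bg D sh K \<rho> c"
proof (intro set_eqI iffI)
  fix d assume "d \<in> cls2 sg bg D sh K \<rho> c'"
  then obtain g where d: "d \<in> Z2 sg bg D sh K \<rho>" "Vector_Spaces.linear sg sh g"
    "\<And>x y. fst d x y = fst c' x y + fst (cob1 bg D K \<rho> g) x y"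
    "\<And>x. snd d x = snd c' x + snd (cob1 bg D K \<rho> g) x" unfolding cls2_def by auto
  then show "d \<in> cls2 sg bg D sh K \<rho> c" unfolding cls2_def
    using fst snd lin_compose_add[OF f d(2)]
    by (auto intro!: exI[of _ "\<lambda>x. f x + g x"] simp: cob1_def algebra_simps)
next
  fix d assume "d \<in> cls2 sg bg D sh K \<rho> c"
  then obtain g where d: "d \<in> Z2 sg bg D sh K \<rho>" "Vector_Spaces.linear sg sh g"
    "\<And>x y. fst d x y = fst c x y + fst (cob1 bg D K \<rho> g) x y"
    "\<And>x. snd d x = snd c x + snd (cob1 bg D K \<rho> g) x" unfolding cls2_def by auto
  then show "d \<in> cls2 sg bg D sh K \<rho> c'" unfolding cls2_def
    using fst snd lin_compose_sub[OF d(2) f]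
    by (auto intro!: exI[of _ "\<lambda>x. g x - f x"] simp: cob1_def algebra_simps)
qed

end

locale abelian_extension = difference_rep sg bg D sh K \<rho>
  for sg :: "'k::field \<Rightarrow> 'g::ab_group_add \<Rightarrow> 'g" and bg D
    and sh :: "'k \<Rightarrow> 'h::ab_group_add \<Rightarrow> 'h" and K \<rho> +
  fixes E :: "('k, 'g, 'h, 'e::ab_group_add) abext"
  assumes abelian_ext: "abelian_ext sg bg D sh K E" and induces_rep: "induces_rep sg \<rho> E"
begin

lemma diff_lie_E: "diff_lie (esc E) (ebr E) (eD E)" using abelian_ext by (simp add: abelian_ext_def)
sublocale e: lie_alg "esc E" "ebr E" using diff_lie_E by (simp add: diff_lie_def lie_alg_def)

lemma linear_eD: "Vector_Spaces.linear (esc E) (esc E) (eD E)"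
  using diff_lie_E by (simp add: diff_lie_def)
lemma eD_bracket:
  "eD E (ebr E a b) = ebr E a (eD E b) - ebr E b (eD E a) + ebr E (eD E a) (eD E b)"
  using diff_lie_E by (simp add: diff_lie_def)
lemma linear_einc: "Vector_Spaces.linear sh (esc E) (einc E)"
  using abelian_ext by (simp add: abelian_ext_def)
lemma linear_eproj: "Vector_Spaces.linear (esc E) sg (eproj E)"
  using abelian_ext by (simp add: abelian_ext_def)
lemmas linear_E_simps[simp] =
  lin_simps[OF linear_eD] lin_simps[OF linear_einc] lin_simps[OF linear_eproj]

lemma inj_einc: "inj (einc E)" using abelian_ext by (simp add: abelian_ext_def)
lemma einc_eq_iff[simp]: "einc E u = einc E v \<longleftrightarrow> u = v" using inj_einc by (simp add: inj_eq)
lemma einc_eq_0_iff[simp]: "einc E u = 0 \<longleftrightarrow> u = 0" using einc_eq_iff[of u 0] by simp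
lemma surj_eproj: "surj (eproj E)" using abelian_ext by (simp add: abelian_ext_def)
lemma range_einc: "range (einc E) = {e. eproj E e = 0}" using abelian_ext by (simp add: abelian_ext_def)
lemma eproj_einc[simp]: "eproj E (einc E u) = 0"
  using range_einc rangeI[of "einc E" u] by simp
lemma bracket_einc[simp]: "ebr E (einc E u) (einc E v) = 0"
  using abelian_ext by (simp add: abelian_ext_def)
lemma eproj_bracket[simp]: "eproj E (ebr E a b) = bg (eproj E a) (eproj E b)"
  using abelian_ext by (simp add: abelian_ext_def)
lemma eD_einc[simp]: "eD E (einc E u) = einc E (K u)" using abelian_ext by (simp add: abelian_ext_def)
lemma eproj_eD[simp]: "eproj E (eD E a) = D (eproj E a)" using abelian_ext by (simp add: abelian_ext_def)
lemma inv_einc[simp]: "inv (einc E) (einc E u) = u" using inj_einc by simp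
lemma einc_inv: "eproj E e = 0 \<Longrightarrow> einc E (inv (einc E) e) = e"
  using range_einc by (simp add: f_inv_into_f)

lemma linear_inv_einc:
  assumes "Vector_Spaces.linear s (esc E) f" and "\<And>x. eproj E (f x) = 0"
  shows "Vector_Spaces.linear s sh (\<lambda>x. inv (einc E) (f x))"
  using assms by (intro lin_inv_into_range[OF _ linear_einc inj_einc]) (auto simp: range_einc)

lemma lin_section_exists: "\<exists>s. lin_section sg E s"
proof -
  interpret vector_space_pair "esc E" sg using linear_eproj by (rule lin_vector_space_pair)
  obtain s where "Vector_Spaces.linear sg (esc E) s" "eproj E \<circ> s = id"
    using linear_surjective_right_inverse[OF linear_eproj surj_eproj] by blast
  then show ?thesis unfolding lin_section_def by (auto simp: fun_eq_iff)
qed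

end

locale ext_section = abelian_extension sg bg D sh K \<rho> E
  for sg :: "'k::field \<Rightarrow> 'g::ab_group_add \<Rightarrow> 'g" and bg D
    and sh :: "'k \<Rightarrow> 'h::ab_group_add \<Rightarrow> 'h" and K \<rho>
    and E :: "('k, 'g, 'h, 'e::ab_group_add) abext" +
  fixes s :: "'g \<Rightarrow> 'e"
  assumes lin_section: "lin_section sg E s"
begin

lemma linear_s: "Vector_Spaces.linear sg (esc E) s" using lin_section by (simp add: lin_section_def)
lemmas linear_s_simps[simp] = lin_simps[OF linear_s]
lemma eproj_s[simp]: "eproj E (s x) = x" using lin_section by (simp add: lin_section_def)
lemma bracket_s_einc[simp]: "ebr E (s x) (einc E u) = einc E (\<rho> x u)"
  using induces_rep lin_section by (simp add: induces_rep_def)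
lemma bracket_einc_s[simp]: "ebr E (einc E u) (s x) = - einc E (\<rho> x u)"
  by (simp only: e.antisym[of "einc E u" "s x"] bracket_s_einc)

lemma einc_ext_omega: "einc E (ext_omega bg E s x y) = ebr E (s x) (s y) - s (bg x y)"
  unfolding ext_omega_def by (rule einc_inv) simp
lemma einc_ext_chi: "einc E (ext_chi D E s x) = eD E (s x) - s (D x)"
  unfolding ext_chi_def by (rule einc_inv) simp
lemma bracket_s: "ebr E (s x) (s y) = s (bg x y) + einc E (ext_omega bg E s x y)"
  by (simp add: einc_ext_omega)
lemma eD_s: "eD E (s x) = s (D x) + einc E (ext_chi D E s x)"
  by (simp add: einc_ext_chi)

lemma dCE2_ext_omega: "dCE2 bg \<rho> (ext_omega bg E s) x y z = 0"
proof -
  have "einc E (dCE2 bg \<rho> (ext_omega bg E s) x y z) =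
      (ebr E (s x) (ebr E (s y) (s z)) - ebr E (s y) (ebr E (s x) (s z))
        + ebr E (s z) (ebr E (s x) (s y)))
      - (ebr E (s x) (s (bg y z)) + ebr E (s (bg y z)) (s x))
      + (ebr E (s y) (s (bg x z)) + ebr E (s (bg x z)) (s y))
      - (ebr E (s z) (s (bg x y)) + ebr E (s (bg x y)) (s z))
      + s (bg (bg x y) z - bg (bg x z) y + bg (bg y z) x)"
    unfolding dCE2_def
    by (simp del: bracket_s_einc add: bracket_s_einc[symmetric] einc_ext_omega algebra_simps)
  also have "\<dots> = 0"
    using e.jacobi_inner g.jacobi_outer e.antisym[of "s (bg y z)" "s x"]
      e.antisym[of "s (bg x z)" "s y"] e.antisym[of "s (bg x y)" "s z"]
    by simp
  finally show ?thesis by simp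
qed

lemma partial1_T2_ext_cocycle:
  "partial1 bg D \<rho> (ext_chi D E s) x y + T2 D K (ext_omega bg E s) x y = 0"
proof -
  have "einc E (partial1 bg D \<rho> (ext_chi D E s) x y + T2 D K (ext_omega bg E s) x y) =
      ebr E (s x) (eD E (s y) - s (D y)) - ebr E (s y) (eD E (s x) - s (D x))
    + ebr E (s (D x)) (eD E (s y) - s (D y)) - ebr E (s (D y)) (eD E (s x) - s (D x))
    - (eD E (s (bg x y)) - s (D (bg x y)))
    + (ebr E (s (D x)) (s y) - s (bg (D x) y)) + (ebr E (s x) (s (D y)) - s (bg x (D y)))
    + (ebr E (s (D x)) (s (D y)) - s (bg (D x) (D y)))
    - eD E (ebr E (s x) (s y) - s (bg x y))"
    unfolding partial1_def T2_def
    by (simp del: bracket_s_einc eD_einc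
        add: eD_einc[symmetric] bracket_s_einc[symmetric] einc_ext_omega einc_ext_chi)
  also have "\<dots> = 0"
    by (simp add: eD_bracket eD_s D_bracket e.antisym[of "s y" "s (D x)"]
        e.antisym[of "s (D y)" "s (D x)"] g.antisym[of y "D x"])
  finally show ?thesis by (simp only: einc_eq_0_iff)
qed

lemma ext_cocycle_in_Z2: "(ext_omega bg E s, ext_chi D E s) \<in> Z2 sg bg D sh K \<rho>"
proof -
  have "Vector_Spaces.linear sg sh (\<lambda>x. ext_omega bg E s x y)" for y
    unfolding ext_omega_def
    by (rule linear_inv_einc[OF lin_compose_sub[OF lin_compose[OF linear_s e.linear_left]
          lin_compose[OF g.linear_left linear_s]]]) simp
  moreover have "Vector_Spaces.linear sg sh (ext_omega bg E s x)" for x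
    unfolding ext_omega_def
    by (rule linear_inv_einc[OF lin_compose_sub[OF lin_compose[OF linear_s e.linear_right]
          lin_compose[OF g.linear_right linear_s]]]) simp
  moreover have "Vector_Spaces.linear sg sh (ext_chi D E s)"
    unfolding ext_chi_def
    by (rule linear_inv_einc[OF lin_compose_sub[OF lin_compose[OF linear_s linear_eD]
          lin_compose[OF linear_D linear_s]]]) simp
  moreover have "ext_omega bg E s x x = 0" for x
    using einc_ext_omega[of x x] by simp
  ultimately show ?thesis
    unfolding Z2_def cochain2_def using dCE2_ext_omega partial1_T2_ext_cocycle by simp
qed

lemma lin_section_shift:
  assumes "Vector_Spaces.linear sg sh f"
  shows "lin_section sg E (\<lambda>x. s x + einc E (f x))"
  unfolding lin_section_def using lin_compose_add[OF linear_s lin_compose[OF assms linear_einc]]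
  by simp

lemma ext_cocycle_shift:
  assumes f: "Vector_Spaces.linear sg sh f"
  defines "t \<equiv> \<lambda>x. s x + einc E (f x)"
  shows "ext_omega bg E t x y = ext_omega bg E s x y + fst (cob1 bg D K \<rho> f) x y"
    and "ext_chi D E t x = ext_chi D E s x + snd (cob1 bg D K \<rho> f) x"
proof -
  interpret t: ext_section sg bg D sh K \<rho> E t
    unfolding t_def using lin_section_shift[OF f] by unfold_locales
  have "einc E (ext_omega bg E t x y) = einc E (ext_omega bg E s x y + fst (cob1 bg D K \<rho> f) x y)"
    unfolding t.einc_ext_omega by (simp add: t_def bracket_s cob1_def algebra_simps)
  then show "ext_omega bg E t x y = ext_omega bg E s x y + fst (cob1 bg D K \<rho> f) x y"
    by (simp only: einc_eq_iff)
  have "einc E (ext_chi D E t x) = einc E (ext_chi D E s x + snd (cob1 bg D K \<rho> f) x)"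
    unfolding t.einc_ext_chi by (simp add: t_def eD_s cob1_def algebra_simps)
  then show "ext_chi D E t x = ext_chi D E s x + snd (cob1 bg D K \<rho> f) x"
    by (simp only: einc_eq_iff)
qed

definition kernel_part :: "'e \<Rightarrow> 'h" where
  "kernel_part e = inv (einc E) (e - s (eproj E e))"

lemma section_plus_kernel_part: "s (eproj E e) + einc E (kernel_part e) = e"
  unfolding kernel_part_def by (subst einc_inv) auto

lemma kernel_part_section_plus[simp]: "kernel_part (s x + einc E w) = w"
  unfolding kernel_part_def by simp

lemma linear_kernel_part: "Vector_Spaces.linear (esc E) sh kernel_part"
  unfolding kernel_part_def[abs_def]
  by (rule linear_inv_einc[OF lin_compose_sub[OF vector_space.linear_id[OF e.vector_space]
        lin_compose[OF linear_eproj linear_s]], unfolded id_def]) simp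

lemma section_plus_cases:
  obtains x w where "e = s x + einc E w"
  using section_plus_kernel_part[of e] by metis

lemma bracket_section_plus:
  "ebr E (s x + einc E u) (s y + einc E v)
     = s (bg x y) + einc E (ext_omega bg E s x y + \<rho> x v - \<rho> y u)"
  by (simp add: bracket_s algebra_simps)

lemma eD_section_plus: "eD E (s x + einc E u) = s (D x) + einc E (ext_chi D E s x + K u)"
  by (simp add: eD_s algebra_simps)

end

context abelian_extension
begin

lemma cls2_ext_cocycle_section_indep:
  assumes s: "lin_section sg E s" and s': "lin_section sg E s'"
  shows "cls2 sg bg D sh K \<rho> (ext_omega bg E s', ext_chi D E s')
       = cls2 sg bg D sh K \<rho> (ext_omega bg E s, ext_chi D E s)"
proof -
  interpret s: ext_section sg bg D sh K \<rho> E s using s by unfold_locales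
  interpret s': ext_section sg bg D sh K \<rho> E s' using s' by unfold_locales
  define f where "f x = inv (einc E) (s' x - s x)" for x
  have f: "Vector_Spaces.linear sg sh f"
    unfolding f_def[abs_def] by (rule linear_inv_einc[OF lin_compose_sub[OF s'.linear_s s.linear_s]]) simp
  have "s' = (\<lambda>x. s x + einc E (f x))"
    by (simp add: fun_eq_iff f_def einc_inv)
  then show ?thesis
    by (intro cls2_eq_if_cohomologous[OF f]) (simp_all add: s.ext_cocycle_shift[OF f])
qed

lemma lin_section_some: "lin_section sg E (SOME s. lin_section sg E s)"
  using lin_section_exists by (rule someI_ex)

lemma ext_class_eq_cls2:
  "lin_section sg E s \<Longrightarrow>
   ext_class sg bg D sh K \<rho> E = cls2 sg bg D sh K \<rho> (ext_omega bg E s, ext_chi D E s)"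
  unfolding ext_class_def Let_def by (rule cls2_ext_cocycle_section_indep[OF _ lin_section_some])

lemma ext_class_in_H2: "ext_class sg bg D sh K \<rho> E \<in> H2 sg bg D sh K \<rho>"
proof -
  interpret ext_section sg bg D sh K \<rho> E "SOME s. lin_section sg E s"
    using lin_section_some by unfold_locales
  show ?thesis
    unfolding H2_def using ext_class_eq_cls2[OF lin_section_some] ext_cocycle_in_Z2 by blast
qed

end

lemma ext_iso_if_ext_cocycles_eq:
  assumes "ext_section sg bg D sh K \<rho> E1 s1" and "ext_section sg bg D sh K \<rho> E2 s2"
    and omega: "ext_omega bg E1 s1 = ext_omega bg E2 s2" and chi: "ext_chi D E1 s1 = ext_chi D E2 s2"
  shows "ext_iso E1 E2"
proof -
  interpret s1: ext_section sg bg D sh K \<rho> E1 s1 by fact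
  interpret s2: ext_section sg bg D sh K \<rho> E2 s2 by fact
  define \<kappa> where "\<kappa> e = s1 (eproj E2 e) + einc E1 (s2.kernel_part e)" for e
  define \<kappa>' where "\<kappa>' e = s2 (eproj E1 e) + einc E2 (s1.kernel_part e)" for e
  have \<kappa>: "\<kappa> (s2 x + einc E2 w) = s1 x + einc E1 w" for x w unfolding \<kappa>_def by simp
  have \<kappa>': "\<kappa>' (s1 x + einc E1 w) = s2 x + einc E2 w" for x w unfolding \<kappa>'_def by simp
  have "\<kappa>' (\<kappa> e) = e" for e by (rule s2.section_plus_cases[of e]) (simp add: \<kappa> \<kappa>')
  moreover have "\<kappa> (\<kappa>' e) = e" for e by (rule s1.section_plus_cases[of e]) (simp add: \<kappa> \<kappa>')
  ultimately have "bij \<kappa>" by (intro o_bij[of \<kappa>']) (simp_all add: fun_eq_iff)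
  moreover have "Vector_Spaces.linear (esc E2) (esc E1) \<kappa>"
    unfolding \<kappa>_def[abs_def]
    by (rule lin_compose_add[OF lin_compose[OF s2.linear_eproj s1.linear_s]
          lin_compose[OF s2.linear_kernel_part s1.linear_einc]])
  moreover have "\<kappa> (ebr E2 a b) = ebr E1 (\<kappa> a) (\<kappa> b)" for a b
    by (rule s2.section_plus_cases[of a], rule s2.section_plus_cases[of b])
      (simp only: \<kappa> s2.bracket_section_plus s1.bracket_section_plus omega)
  moreover have "eD E1 (\<kappa> a) = \<kappa> (eD E2 a)" for a
    by (rule s2.section_plus_cases[of a]) (simp only: \<kappa> s2.eD_section_plus s1.eD_section_plus chi)
  moreover have "\<kappa> (einc E2 u) = einc E1 u" for u
    using \<kappa>[of 0 u] by simp
  moreover have "eproj E1 (\<kappa> a) = eproj E2 a" for a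
    by (rule s2.section_plus_cases[of a]) (simp add: \<kappa>)
  ultimately show ?thesis unfolding ext_iso_def by blast
qed

lemma ext_class_eq_if_ext_iso:
  assumes "abelian_extension sg bg D sh K \<rho> E1" and "abelian_extension sg bg D sh K \<rho> E2"
    and "ext_iso E1 E2"
  shows "ext_class sg bg D sh K \<rho> E1 = ext_class sg bg D sh K \<rho> E2"
proof -
  interpret E1: abelian_extension sg bg D sh K \<rho> E1 by fact
  interpret E2: abelian_extension sg bg D sh K \<rho> E2 by fact
  obtain \<kappa> where \<kappa>: "Vector_Spaces.linear (esc E2) (esc E1) \<kappa>"
      "\<And>a b. \<kappa> (ebr E2 a b) = ebr E1 (\<kappa> a) (\<kappa> b)" "\<And>a. eD E1 (\<kappa> a) = \<kappa> (eD E2 a)"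
      "\<And>u. \<kappa> (einc E2 u) = einc E1 u" "\<And>a. eproj E1 (\<kappa> a) = eproj E2 a"
    using \<open>ext_iso E1 E2\<close> unfolding ext_iso_def by blast
  obtain s where s: "lin_section sg E2 s" using E2.lin_section_exists by blast
  interpret s: ext_section sg bg D sh K \<rho> E2 s using s by unfold_locales
  have \<kappa>s: "lin_section sg E1 (\<lambda>x. \<kappa> (s x))"
    unfolding lin_section_def using lin_compose[OF s.linear_s \<kappa>(1)] \<kappa>(5) by simp
  interpret \<kappa>s: ext_section sg bg D sh K \<rho> E1 "\<lambda>x. \<kappa> (s x)" using \<kappa>s by unfold_locales
  have "einc E1 (ext_omega bg E1 (\<lambda>x. \<kappa> (s x)) x y) = einc E1 (ext_omega bg E2 s x y)" for x y
    using \<kappa>(4)[of "ext_omega bg E2 s x y"]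
    by (simp add: \<kappa>s.einc_ext_omega s.einc_ext_omega \<kappa>(2) lin_diff[OF \<kappa>(1)])
  moreover have "einc E1 (ext_chi D E1 (\<lambda>x. \<kappa> (s x)) x) = einc E1 (ext_chi D E2 s x)" for x
    using \<kappa>(4)[of "ext_chi D E2 s x"]
    by (simp add: \<kappa>s.einc_ext_chi s.einc_ext_chi \<kappa>(3) lin_diff[OF \<kappa>(1)])
  ultimately have "ext_omega bg E1 (\<lambda>x. \<kappa> (s x)) = ext_omega bg E2 s"
    and "ext_chi D E1 (\<lambda>x. \<kappa> (s x)) = ext_chi D E2 s"
    by (simp_all add: fun_eq_iff)
  then show ?thesis using E1.ext_class_eq_cls2[OF \<kappa>s] E2.ext_class_eq_cls2[OF s] by simp
qed

lemma ext_iso_if_ext_class_eq: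
  assumes "abelian_extension sg bg D sh K \<rho> E1" and "abelian_extension sg bg D sh K \<rho> E2"
    and eq: "ext_class sg bg D sh K \<rho> E1 = ext_class sg bg D sh K \<rho> E2"
  shows "ext_iso E1 E2"
proof -
  interpret E1: abelian_extension sg bg D sh K \<rho> E1 by fact
  interpret E2: abelian_extension sg bg D sh K \<rho> E2 by fact
  obtain s1 where s1: "lin_section sg E1 s1" using E1.lin_section_exists by blast
  obtain s2 where s2: "lin_section sg E2 s2" using E2.lin_section_exists by blast
  interpret s1: ext_section sg bg D sh K \<rho> E1 s1 using s1 by unfold_locales
  interpret s2: ext_section sg bg D sh K \<rho> E2 s2 using s2 by unfold_locales
  have "(ext_omega bg E2 s2, ext_chi D E2 s2) \<in> cls2 sg bg D sh K \<rho> (ext_omega bg E1 s1, ext_chi D E1 s1)"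
    using eq E1.ext_class_eq_cls2[OF s1] E2.ext_class_eq_cls2[OF s2] E1.cls2_self[OF s2.ext_cocycle_in_Z2]
    by simp
  then obtain f where f: "Vector_Spaces.linear sg sh f"
    "\<And>x y. ext_omega bg E2 s2 x y = ext_omega bg E1 s1 x y + fst (cob1 bg D K \<rho> f) x y"
    "\<And>x. ext_chi D E2 s2 x = ext_chi D E1 s1 x + snd (cob1 bg D K \<rho> f) x"
    unfolding cls2_def by auto
  interpret t: ext_section sg bg D sh K \<rho> E1 "\<lambda>x. s1 x + einc E1 (f x)"
    using s1.lin_section_shift[OF f(1)] by unfold_locales
  show ?thesis
    by (rule ext_iso_if_ext_cocycles_eq[OF t.ext_section_axioms s2.ext_section_axioms])
      (simp_all add: fun_eq_iff s1.ext_cocycle_shift[OF f(1)] f(2,3))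
qed

locale cocycle = difference_rep sg bg D sh K \<rho>
  for sg :: "'k::field \<Rightarrow> 'g::ab_group_add \<Rightarrow> 'g" and bg D
    and sh :: "'k \<Rightarrow> 'h::ab_group_add \<Rightarrow> 'h" and K \<rho> +
  fixes \<omega> :: "'g \<Rightarrow> 'g \<Rightarrow> 'h" and \<chi> :: "'g \<Rightarrow> 'h"
  assumes Z2: "(\<omega>, \<chi>) \<in> Z2 sg bg D sh K \<rho>"
begin

lemma linear_\<omega>_left: "Vector_Spaces.linear sg sh (\<lambda>x. \<omega> x y)" using Z2 by (simp add: Z2_def cochain2_def)
lemma linear_\<omega>_right: "Vector_Spaces.linear sg sh (\<omega> x)" using Z2 by (simp add: Z2_def cochain2_def)
lemma linear_\<chi>: "Vector_Spaces.linear sg sh \<chi>" using Z2 by (simp add: Z2_def cochain2_def)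
lemmas cochain_simps[simp] =
  lin_simps[OF linear_\<omega>_left] lin_simps[OF linear_\<omega>_right] lin_simps[OF linear_\<chi>]
lemma \<omega>_alternating[simp]: "\<omega> x x = 0" using Z2 by (simp add: Z2_def cochain2_def)
lemma dCE2_\<omega>: "dCE2 bg \<rho> \<omega> x y z = 0" using Z2 by (simp add: Z2_def)
lemma partial1_T2: "partial1 bg D \<rho> \<chi> x y + T2 D K \<omega> x y = 0" using Z2 by (simp add: Z2_def)

lemma \<omega>_antisym: "\<omega> x y = - \<omega> y x"
  by (rule alternating_antisym) simp_all

definition ext_scale :: "'k \<Rightarrow> 'g \<times> 'h \<Rightarrow> 'g \<times> 'h" where
  "ext_scale c p = (sg c (fst p), sh c (snd p))"

definition ext_bracket :: "'g \<times> 'h \<Rightarrow> 'g \<times> 'h \<Rightarrow> 'g \<times> 'h" where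
  "ext_bracket p q = (bg (fst p) (fst q), \<rho> (fst p) (snd q) - \<rho> (fst q) (snd p) + \<omega> (fst p) (fst q))"

definition ext_D :: "'g \<times> 'h \<Rightarrow> 'g \<times> 'h" where
  "ext_D p = (D (fst p), \<chi> (fst p) + K (snd p))"

definition cocycle_ext :: "('k, 'g, 'h, 'g \<times> 'h) abext" where
  "cocycle_ext = \<lparr>esc = ext_scale, ebr = ext_bracket, eD = ext_D, einc = (\<lambda>u. (0, u)), eproj = fst\<rparr>"

lemma module_g: "module sg" using g.vector_space by (simp add: module_iff_vector_space)
lemma module_h: "module sh" using vector_space_h by (simp add: module_iff_vector_space)

lemma vector_space_ext_scale: "vector_space ext_scale"
  unfolding vector_space_def ext_scale_def
  using module.scale_right_distrib[OF module_g] module.scale_right_distrib[OF module_h]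
    module.scale_left_distrib[OF module_g] module.scale_left_distrib[OF module_h]
    module.scale_scale[OF module_g] module.scale_scale[OF module_h]
    module.scale_one[OF module_g] module.scale_one[OF module_h]
  by (simp add: prod_eq_iff)

lemmas scale_simps = lin_scale[OF linear_\<rho>_left, simplified] lin_scale[OF linear_\<rho>_right]
  lin_scale[OF linear_\<omega>_left, simplified] lin_scale[OF linear_\<omega>_right] lin_scale[OF linear_\<chi>]
  lin_scale[OF linear_K] lin_scale[OF linear_D] g.scale_left g.scale_right
  module.scale_right_distrib[OF module_h] module.scale_right_diff_distrib[OF module_h]

lemma linear_ext_bracket_left: "Vector_Spaces.linear ext_scale ext_scale (\<lambda>p. ext_bracket p q)"
  unfolding Vector_Spaces.linear_iff using vector_space_ext_scale
  by (simp add: ext_bracket_def ext_scale_def prod_eq_iff scale_simps algebra_simps)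

lemma linear_ext_bracket_right: "Vector_Spaces.linear ext_scale ext_scale (ext_bracket p)"
  unfolding Vector_Spaces.linear_iff using vector_space_ext_scale
  by (simp add: ext_bracket_def ext_scale_def prod_eq_iff scale_simps algebra_simps)

lemma linear_ext_D: "Vector_Spaces.linear ext_scale ext_scale ext_D"
  unfolding Vector_Spaces.linear_iff using vector_space_ext_scale
  by (simp add: ext_D_def ext_scale_def prod_eq_iff scale_simps algebra_simps)

lemma ext_bracket_jacobi:
  "ext_bracket p (ext_bracket q r) + ext_bracket q (ext_bracket r p) + ext_bracket r (ext_bracket p q) = 0"
proof -
  obtain x u y v z w where "p = (x, u)" "q = (y, v)" "r = (z, w)" by (cases p, cases q, cases r)
  moreover have "\<rho> x (\<omega> y z) - \<rho> y (\<omega> x z) + \<rho> z (\<omega> x y)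
      - \<omega> (bg x y) z + \<omega> (bg x z) y - \<omega> (bg y z) x = 0"
    using dCE2_\<omega> unfolding dCE2_def .
  ultimately show ?thesis
    using g.jacobi[of x y z] \<omega>_antisym[of z x] \<omega>_antisym[of x "bg y z"] \<omega>_antisym[of z "bg x y"]
      \<omega>_antisym[of y "bg z x"] g.antisym[of x z]
    by (simp add: ext_bracket_def \<rho>_bracket algebra_simps zero_prod_def)
qed

lemma diff_lie_cocycle_ext: "diff_lie ext_scale ext_bracket ext_D"
proof -
  have "ext_D (ext_bracket p q)
      = ext_bracket p (ext_D q) - ext_bracket q (ext_D p) + ext_bracket (ext_D p) (ext_D q)" for p q
  proof -
    obtain x u y v where "p = (x, u)" "q = (y, v)" by (cases p, cases q)
    moreover have "\<rho> x (\<chi> y) - \<rho> y (\<chi> x) + \<rho> (D x) (\<chi> y) - \<rho> (D y) (\<chi> x) - \<chi> (bg x y)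
      + (\<omega> (D x) y + \<omega> x (D y) + \<omega> (D x) (D y) - K (\<omega> x y)) = 0"
      using partial1_T2[of x y] unfolding partial1_def T2_def .
    ultimately show ?thesis
      using D_bracket[of x y] K_\<rho>[of x v] K_\<rho>[of y u] \<omega>_antisym[of y "D x"]
      by (simp add: ext_bracket_def ext_D_def algebra_simps)
  qed
  moreover have "lie_algebra ext_scale ext_bracket"
    unfolding lie_algebra_def
    using vector_space_ext_scale linear_ext_bracket_left linear_ext_bracket_right ext_bracket_jacobi
    by (simp add: ext_bracket_def prod_eq_iff)
  ultimately show ?thesis unfolding diff_lie_def using linear_ext_D by simp
qed

lemma abelian_ext_cocycle_ext: "abelian_ext sg bg D sh K cocycle_ext"
proof -
  have "Vector_Spaces.linear sh ext_scale (\<lambda>u. (0, u))"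
    unfolding Vector_Spaces.linear_iff using vector_space_ext_scale vector_space_h
    by (simp add: ext_scale_def prod_eq_iff module.scale_zero_right[OF module_g])
  moreover have "Vector_Spaces.linear ext_scale sg fst"
    unfolding Vector_Spaces.linear_iff using vector_space_ext_scale g.vector_space
    by (simp add: ext_scale_def)
  ultimately show ?thesis
    unfolding abelian_ext_def cocycle_ext_def using diff_lie_cocycle_ext
    by (auto simp: inj_def surj_def ext_bracket_def ext_D_def zero_prod_def image_def
        intro: exI[of _ "(_, 0)"])
qed

lemma induces_rep_cocycle_ext: "induces_rep sg \<rho> cocycle_ext"
  unfolding induces_rep_def cocycle_ext_def lin_section_def by (simp add: ext_bracket_def)

lemma ext_class_cocycle_ext: "ext_class sg bg D sh K \<rho> cocycle_ext = cls2 sg bg D sh K \<rho> (\<omega>, \<chi>)"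
proof -
  interpret abelian_extension sg bg D sh K \<rho> cocycle_ext
    using abelian_ext_cocycle_ext induces_rep_cocycle_ext by unfold_locales
  have s: "lin_section sg cocycle_ext (\<lambda>x. (x, 0))"
    unfolding lin_section_def cocycle_ext_def Vector_Spaces.linear_iff
    using vector_space_ext_scale g.vector_space
    by (simp add: ext_scale_def module.scale_zero_right[OF module_h])
  have "ext_omega bg cocycle_ext (\<lambda>x. (x, 0)) = \<omega>"
    by (auto simp: fun_eq_iff ext_omega_def cocycle_ext_def ext_bracket_def intro!: inv_f_eq inj_onI)
  moreover have "ext_chi D cocycle_ext (\<lambda>x. (x, 0)) = \<chi>"
    by (auto simp: fun_eq_iff ext_chi_def cocycle_ext_def ext_D_def intro!: inv_f_eq inj_onI)
  ultimately show ?thesis using ext_class_eq_cls2[OF s] by simp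
qed

end

theorem theorem4p17:
  fixes sg :: "'k::field \<Rightarrow> 'g::ab_group_add \<Rightarrow> 'g"
    and bg :: "'g \<Rightarrow> 'g \<Rightarrow> 'g" and D :: "'g \<Rightarrow> 'g"
    and sh :: "'k \<Rightarrow> 'h::ab_group_add \<Rightarrow> 'h" and K :: "'h \<Rightarrow> 'h"
    and \<rho> :: "'g \<Rightarrow> 'h \<Rightarrow> 'h"
  assumes "diff_lie sg bg D"
    and "vector_space sh"
    and "Vector_Spaces.linear sh sh K"
    and "diff_rep sg bg D sh K \<rho>"
  shows
    "(\<forall>E :: ('k, 'g, 'h, 'e::ab_group_add) abext.
        abelian_ext sg bg D sh K E \<and> induces_rep sg \<rho> E \<longrightarrow>
          ext_class sg bg D sh K \<rho> E \<in> H2 sg bg D sh K \<rho>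
          \<and> (\<forall>s. lin_section sg E s \<longrightarrow>
                (ext_omega bg E s, ext_chi D E s) \<in> Z2 sg bg D sh K \<rho>
                \<and> cls2 sg bg D sh K \<rho> (ext_omega bg E s, ext_chi D E s)
                    = ext_class sg bg D sh K \<rho> E))
     \<and> (\<forall>(E1 :: ('k, 'g, 'h, 'e1::ab_group_add) abext) (E2 :: ('k, 'g, 'h, 'e2::ab_group_add) abext).
        abelian_ext sg bg D sh K E1 \<and> induces_rep sg \<rho> E1 \<and>
        abelian_ext sg bg D sh K E2 \<and> induces_rep sg \<rho> E2 \<longrightarrow>
          (ext_class sg bg D sh K \<rho> E1 = ext_class sg bg D sh K \<rho> E2 \<longleftrightarrow> ext_iso E1 E2))
     \<and> (\<forall>c \<in> H2 sg bg D sh K \<rho>. \<exists>E :: ('k, 'g, 'h, 'g \<times> 'h) abext.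
          abelian_ext sg bg D sh K E \<and> induces_rep sg \<rho> E \<and> ext_class sg bg D sh K \<rho> E = c)"
proof (intro conjI allI impI ballI)
  fix E :: "('k, 'g, 'h, 'e::ab_group_add) abext"
  assume "abelian_ext sg bg D sh K E \<and> induces_rep sg \<rho> E"
  with assms(4) interpret E: abelian_extension sg bg D sh K \<rho> E by unfold_locales auto
  show "ext_class sg bg D sh K \<rho> E \<in> H2 sg bg D sh K \<rho>" by (rule E.ext_class_in_H2)
  fix s assume s: "lin_section sg E s"
  then interpret ext_section sg bg D sh K \<rho> E s by unfold_locales
  show "(ext_omega bg E s, ext_chi D E s) \<in> Z2 sg bg D sh K \<rho>" by (rule ext_cocycle_in_Z2)
  show "cls2 sg bg D sh K \<rho> (ext_omega bg E s, ext_chi D E s) = ext_class sg bg D sh K \<rho> E"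
    using E.ext_class_eq_cls2[OF s] by simp
next
  fix E1 :: "('k, 'g, 'h, 'e1::ab_group_add) abext" and E2 :: "('k, 'g, 'h, 'e2::ab_group_add) abext"
  assume "abelian_ext sg bg D sh K E1 \<and> induces_rep sg \<rho> E1 \<and>
    abelian_ext sg bg D sh K E2 \<and> induces_rep sg \<rho> E2"
  with assms(4) have "abelian_extension sg bg D sh K \<rho> E1" and "abelian_extension sg bg D sh K \<rho> E2"
    by unfold_locales auto
  then show "ext_class sg bg D sh K \<rho> E1 = ext_class sg bg D sh K \<rho> E2 \<longleftrightarrow> ext_iso E1 E2"
    using ext_class_eq_if_ext_iso ext_iso_if_ext_class_eq by blast
next
  fix c assume "c \<in> H2 sg bg D sh K \<rho>"
  then obtain \<omega> \<chi> where Z: "(\<omega>, \<chi>) \<in> Z2 sg bg D sh K \<rho>" and c: "c = cls2 sg bg D sh K \<rho> (\<omega>, \<chi>)"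
    unfolding H2_def by auto
  interpret cocycle sg bg D sh K \<rho> \<omega> \<chi> using assms(4) Z by unfold_locales
  show "\<exists>E :: ('k, 'g, 'h, 'g \<times> 'h) abext.
      abelian_ext sg bg D sh K E \<and> induces_rep sg \<rho> E \<and> ext_class sg bg D sh K \<rho> E = c"
    using abelian_ext_cocycle_ext induces_rep_cocycle_ext ext_class_cocycle_ext c by blast
qed

end
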